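(* Under the hypotheses of the two-shock setting ($v_\pm>0$, $u_->u_+$, intermediate state $(u_*^{\epsilon_1\epsilon_2},v_*^{\epsilon_1\epsilon_2})$), $$\lim_{\epsilon_1,\epsilon_2\to0}2\sqrt{\epsilon_1}\,v_*^{\epsilon_1\epsilon_2}=\frac{u_--u_+}{2}.$$
   Context: Perturbed Brio system: $u_t+(\tfrac12u^2+\tfrac12\epsilon_1v^2)_x=0$, $v_t+(uv-\epsilon_2v)_x=0$, $\epsilon_1,\epsilon_2>0$, $v>0$, with Riemann data $(u_-,v_-)$ for $x<0$, $(u_+,v_+)$ for $x>0$. A two-shock Riemann solution is one with an intermediate state $(u_*,v_* )$, $v_*>\max(v_-,v_+)$, $u_+<u_*<u_-$, such that $$u_*=u_-+(v_*-v_-)\frac{\epsilon_2-\sqrt{\epsilon_2^2+4\epsilon_1(v_*+v_-)^2}}{v_*+v_-},\qquad u_+=u_*+(v_+-v_* )\frac{\epsilon_2+\sqrt{\epsilon_2^2+4\epsilon_1(v_*+v_+)^2}}{v_*+v_+},$$ with shock speeds $\sigma_1=u_-+\frac{v_*(u_*-u_-)}{v_*-v_-}-\epsilon_2$ and $\sigma_2=u_++\frac{v_*(u_+-u_* )}{v_+-v_*}-\epsilon_2$. The limit is taken over parameters for which this solution exists. *)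

theory Defs
  imports Complex_Main
begin

text \<open>Two-shock Riemann solution of the perturbed Brio system with parameters
  e1 = epsilon_1, e2 = epsilon_2, Riemann data (um, vm) (left) and (up, vp) (right),
  and intermediate state (us, vs).\<close>
definition two_shock ::
  "real \<Rightarrow> real \<Rightarrow> real \<Rightarrow> real \<Rightarrow> real \<Rightarrow> real \<Rightarrow> real \<Rightarrow> real \<Rightarrow> bool" where
  "two_shock e1 e2 um vm up vp us vs \<longleftrightarrow>
     vs > max vm vp \<and> up < us \<and> us < um \<and>
     us = um + (vs - vm) * (e2 - sqrt (e2\<^sup>2 + 4 * e1 * (vs + vm)\<^sup>2)) / (vs + vm) \<and>
     up = us + (vp - vs) * (e2 + sqrt (e2\<^sup>2 + 4 * e1 * (vs + vp)\<^sup>2)) / (vs + vp)"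

definition sigma1 :: "real \<Rightarrow> real \<Rightarrow> real \<Rightarrow> real \<Rightarrow> real \<Rightarrow> real" where
  "sigma1 e2 um vm us vs = um + vs * (us - um) / (vs - vm) - e2"

definition sigma2 :: "real \<Rightarrow> real \<Rightarrow> real \<Rightarrow> real \<Rightarrow> real \<Rightarrow> real" where
  "sigma2 e2 up vp us vs = up + vs * (up - us) / (vp - vs) - e2"

end

theory Submission
  imports Defs
begin

text \<open>Writing the jump conditions as um - us = (vs - vm) (S1 - e2)/(vs + vm) and
  us - up = (vs - vp) (S2 + e2)/(vs + vp) with S_i = sqrt (e2^2 + 4 e1 (vs + v)^2), the bounds
  2 sqrt e1 (vs + v) \<le> S_i \<le> e2 + 2 sqrt e1 (vs + v) pin each jump down to within e2 of
  2 sqrt e1 (vs - v). Adding them, 2 sqrt e1 vs differs from (um - up)/2 by at most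
  sqrt e1 (vm + vp) + e2, which tends to 0 with the parameters.\<close>

lemma sqrt_shock_radicand_bounds:
  fixes c e A :: real
  assumes "0 \<le> c" "0 \<le> e" "0 \<le> A"
  shows "2 * sqrt c * A \<le> sqrt (e\<^sup>2 + 4 * c * A\<^sup>2)"
    and "sqrt (e\<^sup>2 + 4 * c * A\<^sup>2) \<le> e + 2 * sqrt c * A"
proof -
  have sq: "4 * c * A\<^sup>2 = (2 * sqrt c * A)\<^sup>2"
    using assms(1) by (simp add: power_mult_distrib)
  show "2 * sqrt c * A \<le> sqrt (e\<^sup>2 + 4 * c * A\<^sup>2)"
    unfolding sq by (rule real_sqrt_sum_squares_ge2)
  have "sqrt (e\<^sup>2 + 4 * c * A\<^sup>2) \<le> sqrt (e\<^sup>2) + sqrt ((2 * sqrt c * A)\<^sup>2)"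
    unfolding sq by (rule sqrt_add_le_add_sqrt) simp_all
  also have "\<dots> = e + 2 * sqrt c * A"
    using assms by simp
  finally show "sqrt (e\<^sup>2 + 4 * c * A\<^sup>2) \<le> e + 2 * sqrt c * A" .
qed

lemma shock_jump_bounds:
  fixes c e d A :: real
  assumes "0 \<le> c" "0 \<le> e" "0 \<le> d" "d \<le> A" "0 < A"
  defines "S \<equiv> sqrt (e\<^sup>2 + 4 * c * A\<^sup>2)"
  shows "2 * sqrt c * d - e \<le> d * (S - e) / A" and "d * (S - e) / A \<le> 2 * sqrt c * d"
    and "2 * sqrt c * d \<le> d * (S + e) / A" and "d * (S + e) / A \<le> 2 * sqrt c * d + 2 * e"
proof -
  have S: "2 * sqrt c * A \<le> S" "S \<le> e + 2 * sqrt c * A"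
    unfolding S_def using sqrt_shock_radicand_bounds assms by auto
  have de: "d * e \<le> A * e"
    using assms by (simp add: mult_right_mono)
  have "d * (2 * sqrt c * A - e) \<le> d * (S - e)" "d * (S - e) \<le> d * (2 * sqrt c * A)"
    "d * (2 * sqrt c * A) \<le> d * (S + e)" "d * (S + e) \<le> d * (2 * sqrt c * A + 2 * e)"
    using S assms by (simp_all add: mult_left_mono)
  with de assms(5) show "2 * sqrt c * d - e \<le> d * (S - e) / A" "d * (S - e) / A \<le> 2 * sqrt c * d"
    "2 * sqrt c * d \<le> d * (S + e) / A" "d * (S + e) / A \<le> 2 * sqrt c * d + 2 * e"
    by (simp_all add: field_simps)
qed

lemma two_shock_intermediate_bound:
  assumes "0 < vm" "0 < vp" "0 < e1" "0 < e2" "two_shock e1 e2 um vm up vp us vs"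
  shows "\<bar>2 * sqrt e1 * vs - (um - up) / 2\<bar> \<le> sqrt e1 * (vm + vp) + e2"
proof -
  define S1 where "S1 = sqrt (e2\<^sup>2 + 4 * e1 * (vs + vm)\<^sup>2)"
  define S2 where "S2 = sqrt (e2\<^sup>2 + 4 * e1 * (vs + vp)\<^sup>2)"
  have v: "vm < vs" "vp < vs"
    and us: "us = um + (vs - vm) * (e2 - S1) / (vs + vm)"
    and up: "up = us + (vp - vs) * (e2 + S2) / (vs + vp)"
    using assms(5) unfolding two_shock_def S1_def S2_def by auto
  have left_jump: "um - us = (vs - vm) * (S1 - e2) / (vs + vm)"
    using us by (simp add: divide_simps algebra_simps)
  have right_jump: "us - up = (vs - vp) * (S2 + e2) / (vs + vp)"
    using up by (simp add: divide_simps algebra_simps)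
  have "2 * sqrt e1 * (vs - vm) - e2 \<le> um - us" "um - us \<le> 2 * sqrt e1 * (vs - vm)"
    unfolding left_jump S1_def
    using shock_jump_bounds(1,2)[of e1 e2 "vs - vm" "vs + vm"] assms v by auto
  moreover have "2 * sqrt e1 * (vs - vp) \<le> us - up" "us - up \<le> 2 * sqrt e1 * (vs - vp) + 2 * e2"
    unfolding right_jump S2_def
    using shock_jump_bounds(3,4)[of e1 e2 "vs - vp" "vs + vp"] assms v by auto
  moreover have "0 \<le> sqrt e1 * vm" "0 \<le> sqrt e1 * vp"
    using assms by simp_all
  ultimately show ?thesis
    using assms(4) unfolding abs_le_iff ring_distribs mult.assoc by argo
qed

lemma small_sqrt_linear_bound:
  fixes K \<epsilon> :: real
  assumes "0 \<le> K" "0 < \<epsilon>"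
  obtains \<delta> where "0 < \<delta>" "\<And>x y. 0 \<le> x \<Longrightarrow> x < \<delta> \<Longrightarrow> y < \<delta> \<Longrightarrow> sqrt x * K + y < \<epsilon>"
proof
  define c where "c = \<epsilon> / (K + 1)"
  have "c * K + c = c * (K + 1)"
    by (simp add: algebra_simps)
  then have c: "0 < c" "c * K + c = \<epsilon>"
    using assms unfolding c_def by simp_all
  show "0 < min c (c\<^sup>2)"
    using c by simp
  fix x y :: real
  assume "0 \<le> x" "x < min c (c\<^sup>2)" "y < min c (c\<^sup>2)"
  then have "sqrt x < sqrt (c\<^sup>2)" "y < c"
    by (simp_all only: min_less_iff_conj real_sqrt_less_mono)
  then have "sqrt x < c"
    using c by simp
  then have "sqrt x * K \<le> c * K"
    using assms by (simp add: mult_right_mono)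
  with \<open>y < c\<close> c show "sqrt x * K + y < \<epsilon>"
    by linarith
qed

theorem lemma5p2:
  fixes um vm up vp :: real
  assumes "vm > 0" and "vp > 0" and "um > up"
  shows "\<forall>\<epsilon>>0. \<exists>\<delta>>0. \<forall>e1 e2 us vs.
           0 < e1 \<and> e1 < \<delta> \<and> 0 < e2 \<and> e2 < \<delta> \<and> two_shock e1 e2 um vm up vp us vs
           \<longrightarrow> \<bar>2 * sqrt e1 * vs - (um - up) / 2\<bar> < \<epsilon>"
proof (intro allI impI)
  fix \<epsilon> :: real
  assume "\<epsilon> > 0"
  then obtain \<delta> where "0 < \<delta>"
    and small: "\<And>x y. 0 \<le> x \<Longrightarrow> x < \<delta> \<Longrightarrow> y < \<delta> \<Longrightarrow> sqrt x * (vm + vp) + y < \<epsilon>"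
    using small_sqrt_linear_bound[of "vm + vp" \<epsilon>] assms by auto
  have "\<bar>2 * sqrt e1 * vs - (um - up) / 2\<bar> < \<epsilon>"
    if "0 < e1" "e1 < \<delta>" "0 < e2" "e2 < \<delta>" "two_shock e1 e2 um vm up vp us vs" for e1 e2 us vs
    using two_shock_intermediate_bound[OF assms(1,2) that(1,3,5)] small[of e1 e2] that
    by fastforce
  with \<open>0 < \<delta>\<close> show "\<exists>\<delta>>0. \<forall>e1 e2 us vs.
           0 < e1 \<and> e1 < \<delta> \<and> 0 < e2 \<and> e2 < \<delta> \<and> two_shock e1 e2 um vm up vp us vs
           \<longrightarrow> \<bar>2 * sqrt e1 * vs - (um - up) / 2\<bar> < \<epsilon>"
    by blast
qed

end
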